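(* Let $\mathcal H$ be a non-binary MMP hypergraph of hypergraph-dimension $n\ge 3$ with $l$ hyperedges. Then $\mathcal H$ satisfies the e-inequalities $$l_{cM}<l\qquad\text{and}\qquad l_{cm}<l .$$
   Context: A hypergraph $\mathcal H=(V,E)$ consists of a finite vertex set $V$ and a family $E$ of subsets of $V$ (hyperedges). An MMP hypergraph of hypergraph-dimension $n\ge3$ is a connected hypergraph in which: every vertex belongs to at least one hyperedge; every hyperedge contains at least $2$ and at most $n$ vertices; no hyperedge shares only one vertex with another hyperedge; and any two hyperedges intersect in at most $n-2$ vertices. Consider $0$-$1$ assignments to the vertices and the rules: (i) no two vertices within any hyperedge are both assigned $1$; (ii) in every hyperedge not all vertices are assigned $0$. $\mathcal H$ is non-binary if no $0$-$1$ assignment satisfies both (i) and (ii), and binary otherwise. A classical assignment is a $0$-$1$ assignment satisfying rule (i) in which no further vertex can be switched from $0$ to $1$ without violating (i). For a classical assignment, the classical hyperedge number $l_c$ is the number of hyperedges containing a vertex assigned $1$; $l_{cM}$ and $l_{cm}$ denote the maximum and minimum of $l_c$ over all classical assignments. *)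

theory Defs
  imports Main
begin

definition hypergraph :: "'a set \<Rightarrow> 'a set set \<Rightarrow> bool" where
  "hypergraph V E \<longleftrightarrow> finite V \<and> (\<forall>e\<in>E. e \<subseteq> V)"

definition hg_adj :: "'a set set \<Rightarrow> ('a \<times> 'a) set" where
  "hg_adj E = {(u, v). \<exists>e\<in>E. u \<in> e \<and> v \<in> e}"

definition hg_connected :: "'a set \<Rightarrow> 'a set set \<Rightarrow> bool" where
  "hg_connected V E \<longleftrightarrow> (\<forall>u\<in>V. \<forall>v\<in>V. (u, v) \<in> (hg_adj E)\<^sup>*)"

definition MMP :: "nat \<Rightarrow> 'a set \<Rightarrow> 'a set set \<Rightarrow> bool" where
  "MMP n V E \<longleftrightarrow> n \<ge> 3 \<and> hypergraph V E \<and> hg_connected V E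
     \<and> (\<forall>v\<in>V. \<exists>e\<in>E. v \<in> e)
     \<and> (\<forall>e\<in>E. 2 \<le> card e \<and> card e \<le> n)
     \<and> (\<forall>e\<in>E. \<forall>f\<in>E. e \<noteq> f \<longrightarrow> card (e \<inter> f) \<noteq> 1)
     \<and> (\<forall>e\<in>E. \<forall>f\<in>E. e \<noteq> f \<longrightarrow> card (e \<inter> f) \<le> n - 2)"

(* a 0-1 assignment is represented by the set S \<subseteq> V of vertices assigned 1 *)
definition rule_i :: "'a set set \<Rightarrow> 'a set \<Rightarrow> bool" where
  "rule_i E S \<longleftrightarrow> (\<forall>e\<in>E. \<forall>u\<in>e. \<forall>v\<in>e. u \<noteq> v \<longrightarrow> \<not> (u \<in> S \<and> v \<in> S))"

definition rule_ii :: "'a set set \<Rightarrow> 'a set \<Rightarrow> bool" where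
  "rule_ii E S \<longleftrightarrow> (\<forall>e\<in>E. \<exists>v\<in>e. v \<in> S)"

definition non_binary :: "'a set \<Rightarrow> 'a set set \<Rightarrow> bool" where
  "non_binary V E \<longleftrightarrow> \<not> (\<exists>S\<subseteq>V. rule_i E S \<and> rule_ii E S)"

definition classical :: "'a set \<Rightarrow> 'a set set \<Rightarrow> 'a set \<Rightarrow> bool" where
  "classical V E S \<longleftrightarrow> S \<subseteq> V \<and> rule_i E S \<and>
     (\<forall>v\<in>V - S. \<not> rule_i E (insert v S))"

definition l_c :: "'a set set \<Rightarrow> 'a set \<Rightarrow> nat" where
  "l_c E S = card {e\<in>E. \<exists>v\<in>e. v \<in> S}"

definition l_cM :: "'a set \<Rightarrow> 'a set set \<Rightarrow> nat" where
  "l_cM V E = Max {l_c E S | S. classical V E S}"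

definition l_cm :: "'a set \<Rightarrow> 'a set set \<Rightarrow> nat" where
  "l_cm V E = Min {l_c E S | S. classical V E S}"

end

theory Submission
  imports Defs
begin

text \<open>A classical assignment satisfies rule (i); if the hypergraph is non-binary it must
  therefore violate rule (ii), i.e. some hyperedge contains no vertex assigned 1, so every
  classical hyperedge number is below the number of hyperedges. Since classical assignments
  exist (maximal independent sets), both extremes are attained and inherit this bound.\<close>

lemma hypergraph_finite_edges:
  assumes "hypergraph V E"
  shows "finite E"
proof -
  have "E \<subseteq> Pow V" using assms by (auto simp: hypergraph_def)
  moreover have "finite (Pow V)" using assms by (simp add: hypergraph_def)
  ultimately show ?thesis by (rule finite_subset)
qed

lemma classical_exists:
  assumes "finite V"
  shows "\<exists>S. classical V E S"
proof -
  let ?I = "{S. S \<subseteq> V \<and> rule_i E S}"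
  have "?I \<subseteq> Pow V" by blast
  then have "finite ?I" using assms by (simp add: finite_subset)
  moreover have "{} \<in> ?I" by (simp add: rule_i_def)
  ultimately obtain S where S: "S \<in> ?I" and maximal: "\<forall>T\<in>?I. S \<subseteq> T \<longrightarrow> S = T"
    using finite_has_maximal[of ?I] by blast
  have "\<not> rule_i E (insert v S)" if v: "v \<in> V - S" for v
  proof
    assume "rule_i E (insert v S)"
    then have "insert v S \<in> ?I" using S v by blast
    then have "S = insert v S" using maximal by blast
    then show False using v by blast
  qed
  then show ?thesis using S unfolding classical_def by blast
qed

lemma l_c_less_card_iff:
  assumes "finite E"
  shows "l_c E S < card E \<longleftrightarrow> \<not> rule_ii E S"
proof -
  let ?C = "{e\<in>E. \<exists>v\<in>e. v \<in> S}"
  have "card ?C < card E \<longleftrightarrow> ?C \<noteq> E"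
  proof
    assume "card ?C < card E"
    then show "?C \<noteq> E" by (metis less_irrefl)
  next
    assume "?C \<noteq> E"
    then have "?C \<subset> E" by blast
    then show "card ?C < card E" using assms by (rule psubset_card_mono[rotated])
  qed
  also have "?C \<noteq> E \<longleftrightarrow> \<not> rule_ii E S"
    unfolding rule_ii_def by auto
  finally show ?thesis unfolding l_c_def .
qed

lemma l_c_less_card_if_non_binary:
  assumes "finite E" and "non_binary V E" and "classical V E S"
  shows "l_c E S < card E"
proof -
  have "S \<subseteq> V" and "rule_i E S" using assms(3) unfolding classical_def by simp_all
  then have "\<not> rule_ii E S" using assms(2) unfolding non_binary_def by blast
  then show ?thesis using l_c_less_card_iff[OF assms(1)] by simp
qed

lemma classical_l_c_values_finite:
  assumes "finite E"
  shows "finite (l_c E ` {S. classical V E S})"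
proof (rule finite_subset)
  show "l_c E ` {S. classical V E S} \<subseteq> {..card E}"
    using card_mono[OF assms] unfolding l_c_def by fastforce
qed simp

lemma classical_l_c_values_nonempty:
  assumes "finite V"
  shows "l_c E ` {S. classical V E S} \<noteq> {}"
  using classical_exists[OF assms] by blast

lemma l_cM_attained:
  assumes "hypergraph V E"
  obtains S where "classical V E S" and "l_cM V E = l_c E S"
proof -
  have "finite V" using assms by (simp add: hypergraph_def)
  have "l_cM V E \<in> l_c E ` {S. classical V E S}"
    unfolding l_cM_def setcompr_eq_image
    by (rule Max_in[OF classical_l_c_values_finite[OF hypergraph_finite_edges[OF assms]]
        classical_l_c_values_nonempty[OF \<open>finite V\<close>]])
  then show ?thesis using that by blast
qed

lemma l_cm_attained:
  assumes "hypergraph V E"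
  obtains S where "classical V E S" and "l_cm V E = l_c E S"
proof -
  have "finite V" using assms by (simp add: hypergraph_def)
  have "l_cm V E \<in> l_c E ` {S. classical V E S}"
    unfolding l_cm_def setcompr_eq_image
    by (rule Min_in[OF classical_l_c_values_finite[OF hypergraph_finite_edges[OF assms]]
        classical_l_c_values_nonempty[OF \<open>finite V\<close>]])
  then show ?thesis using that by blast
qed

theorem lemma5:
  fixes V :: "'a set" and E :: "'a set set" and n :: nat
  assumes "MMP n V E" and "non_binary V E"
  shows "l_cM V E < card E \<and> l_cm V E < card E"
proof -
  have hg: "hypergraph V E" using assms(1) by (simp add: MMP_def)
  then have "finite E" by (rule hypergraph_finite_edges)
  then have bound: "classical V E S \<Longrightarrow> l_c E S < card E" for S
    using l_c_less_card_if_non_binary assms(2) by blast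
  obtain S where "classical V E S" and "l_cM V E = l_c E S" using l_cM_attained[OF hg] .
  moreover obtain T where "classical V E T" and "l_cm V E = l_c E T" using l_cm_attained[OF hg] .
  ultimately show ?thesis using bound by simp
qed

end
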